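(* For every $n\ge 1$, the map $\mathcal I^C_{2n}(321)\to 2^{[n]}$, $\pi\mapsto E_\pi$, is a bijection. In particular $|\mathcal I^C_{2n}(321)|=2^n$, and every element of $\mathcal I^C_{2n}(321)$ is uniquely determined by its set of excedances lying in $[n]$.
   Context: $[n]=\{1,\dots,n\}$ and $2^{[n]}$ is the family of all subsets of $[n]$. A permutation $\pi\in\mathcal S_m$ is centrosymmetric if $\pi(i)+\pi(m+1-i)=m+1$ for all $i$; $\mathcal I^C_{m}(321)$ is the set of centrosymmetric involutions in $\mathcal S_m$ avoiding the pattern $321$. An excedance of $\pi$ is a position $i$ with $\pi(i)>i$; $\mathrm{Exc}(\pi)$ is the set of excedances, and for $\pi\in\mathcal I^C_{2n}(321)$, $E_\pi=\mathrm{Exc}(\pi)\cap[n]$. *)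

theory Defs
  imports Main "HOL-Combinatorics.Permutations"
begin

text \<open>Permutations of [m] = {1..m} are functions nat => nat permuting {1..m}
  (identity outside).\<close>

definition centrosymmetric :: "nat \<Rightarrow> (nat \<Rightarrow> nat) \<Rightarrow> bool" where
  "centrosymmetric m \<pi> \<longleftrightarrow> (\<forall>i\<in>{1..m}. \<pi> i + \<pi> (m + 1 - i) = m + 1)"

definition involution_on :: "nat \<Rightarrow> (nat \<Rightarrow> nat) \<Rightarrow> bool" where
  "involution_on m \<pi> \<longleftrightarrow> (\<forall>i\<in>{1..m}. \<pi> (\<pi> i) = i)"

definition avoids321 :: "nat \<Rightarrow> (nat \<Rightarrow> nat) \<Rightarrow> bool" where
  "avoids321 m \<pi> \<longleftrightarrow>
     \<not> (\<exists>i j k. 1 \<le> i \<and> i < j \<and> j < k \<and> k \<le> m \<and> \<pi> i > \<pi> j \<and> \<pi> j > \<pi> k)"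

definition IC321 :: "nat \<Rightarrow> (nat \<Rightarrow> nat) set" where
  "IC321 m = {\<pi>. \<pi> permutes {1..m} \<and> involution_on m \<pi> \<and> centrosymmetric m \<pi> \<and> avoids321 m \<pi>}"

definition Exc :: "nat \<Rightarrow> (nat \<Rightarrow> nat) \<Rightarrow> nat set" where
  "Exc m \<pi> = {i \<in> {1..m}. \<pi> i > i}"

definition Epi :: "nat \<Rightarrow> (nat \<Rightarrow> nat) \<Rightarrow> nat set" where
  "Epi n \<pi> = Exc (2 * n) \<pi> \<inter> {1..n}"

end

theory Submission imports Defs begin

text \<open>A 321-avoiding involution \<open>\<pi>\<close> is a system of arcs \<open>(a, \<pi> a)\<close> in which no arc spans a
  fixed point and at a non-excedance \<open>i\<close> the leftmost open arc closes (if any is open). Hence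
  \<open>\<pi>\<close> is determined by its excedances, and even its deficiencies among \<open>1, \<dots>, k\<close> are
  determined by its excedances among \<open>1, \<dots>, k\<close>. For centrosymmetric \<open>\<pi>\<close> the excedances in
  the second half mirror the deficiencies in the first half, so \<open>\<pi>\<close> is determined by \<open>E\<^sub>\<pi>\<close>.
  Conversely, for \<open>S \<subseteq> [n]\<close> the positions outside \<open>S\<close> greedily close the arcs opened by \<open>S\<close>;
  mirroring this gives sets of excedances and deficiencies satisfying the ballot condition, and
  matching them in increasing order yields a 321-avoiding involution with \<open>E\<^sub>\<pi> = S\<close>. It is
  centrosymmetric because its reverse complement has the same excedances.\<close>

lemma avoids321I:
  "(\<And>i j k. 1 \<le> i \<Longrightarrow> i < j \<Longrightarrow> j < k \<Longrightarrow> k \<le> m \<Longrightarrow> p j < p i \<Longrightarrow> p k < p j \<Longrightarrow> False)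
    \<Longrightarrow> avoids321 m p"
  unfolding avoids321_def by blast

lemma avoids321D:
  "avoids321 m p \<Longrightarrow> 1 \<le> i \<Longrightarrow> i < j \<Longrightarrow> j < k \<Longrightarrow> k \<le> m \<Longrightarrow> p j < p i \<Longrightarrow> p k < p j \<Longrightarrow> False"
  unfolding avoids321_def by blast

definition rank :: "nat set \<Rightarrow> nat \<Rightarrow> nat" where
  "rank X y = card {x \<in> X. x < y}"

lemma rank_0 [simp]: "rank X 0 = 0"
  unfolding rank_def by simp

lemma rank_le_card: "finite X \<Longrightarrow> rank X y \<le> card X"
  unfolding rank_def by (intro card_mono) auto

lemma rank_eq_card_if_subset: "X \<subseteq> {1..n} \<Longrightarrow> n < y \<Longrightarrow> rank X y = card X"
  unfolding rank_def by (rule arg_cong[where f = card]) auto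

lemma rank_Suc: "finite X \<Longrightarrow> rank X (Suc y) = rank X y + (if y \<in> X then 1 else 0)"
proof -
  assume "finite X"
  have "{x \<in> X. x < Suc y} = (if y \<in> X then insert y {x \<in> X. x < y} else {x \<in> X. x < y})"
    by (auto simp: less_Suc_eq)
  with \<open>finite X\<close> show ?thesis
    unfolding rank_def by simp
qed

lemma rank_mono: "finite X \<Longrightarrow> y \<le> y' \<Longrightarrow> rank X y \<le> rank X y'"
  unfolding rank_def by (intro card_mono) auto

lemma rank_less_rank: "finite X \<Longrightarrow> y \<in> X \<Longrightarrow> y < y' \<Longrightarrow> rank X y < rank X y'"
  unfolding rank_def by (intro psubset_card_mono) auto

lemma rank_less_rank_iff:
  "finite X \<Longrightarrow> y \<in> X \<Longrightarrow> y' \<in> X \<Longrightarrow> rank X y < rank X y' \<longleftrightarrow> y < y'"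
  by (metis rank_less_rank linorder_neq_iff order_less_asym)

lemma rank_eq_rank_iff:
  "finite X \<Longrightarrow> y \<in> X \<Longrightarrow> y' \<in> X \<Longrightarrow> rank X y = rank X y' \<longleftrightarrow> y = y'"
  by (metis rank_less_rank linorder_neq_iff less_irrefl)

lemma bij_betw_rank: "finite X \<Longrightarrow> bij_betw (rank X) X {..<card X}"
proof -
  assume fin: "finite X"
  have inj: "inj_on (rank X) X"
    using rank_eq_rank_iff[OF fin] by (auto intro: inj_onI)
  have "rank X ` X \<subseteq> {..<card X}"
    using fin unfolding rank_def by (auto intro!: psubset_card_mono)
  moreover have "card (rank X ` X) = card {..<card X}"
    using card_image[OF inj] by simp
  ultimately show ?thesis
    using inj card_subset_eq unfolding bij_betw_def by blast
qed

definition rank_match :: "nat set \<Rightarrow> nat set \<Rightarrow> nat \<Rightarrow> nat" where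
  "rank_match A B x =
     (if x \<in> A then the_inv_into B (rank B) (rank A x)
      else if x \<in> B then the_inv_into A (rank A) (rank B x) else x)"

lemma rank_match_commute: "A \<inter> B = {} \<Longrightarrow> rank_match A B = rank_match B A"
  unfolding rank_match_def by (auto intro!: ext)

lemma rank_match_mem:
  assumes "finite A" "finite B" "card A = card B" "x \<in> A"
  shows "rank_match A B x \<in> B \<and> rank B (rank_match A B x) = rank A x"
proof -
  have bij: "bij_betw (rank B) B {..<card B}"
    using bij_betw_rank[OF assms(2)] .
  have "rank A x \<in> {..<card B}"
    using bij_betwE[OF bij_betw_rank[OF assms(1)]] assms(3,4) by auto
  then show ?thesis
    using assms(4) bij_betwE[OF bij_betw_the_inv_into[OF bij]] f_the_inv_into_f_bij_betw[OF bij]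
    unfolding rank_match_def by auto
qed

text \<open>The matching pairs the \<open>k\<close>-th smallest element of \<open>A\<close> with the \<open>k\<close>-th smallest
  element of \<open>B\<close>. The ballot condition makes every element of \<open>A\<close> smaller than its partner,
  and the balance at fixed points means that no arc passes over a fixed point.\<close>

locale ballot_sets =
  fixes A B :: "nat set" and m :: nat
  assumes A_subset: "A \<subseteq> {1..m}" and B_subset: "B \<subseteq> {1..m}"
    and disjoint: "A \<inter> B = {}" and card_eq: "card A = card B"
    and ballot: "\<And>t. rank B t \<le> rank A t"
    and balanced_at_fixed_points: "\<And>f. f \<in> {1..m} \<Longrightarrow> f \<notin> A \<Longrightarrow> f \<notin> B \<Longrightarrow> rank B f = rank A f"
begin

abbreviation match :: "nat \<Rightarrow> nat" where
  "match \<equiv> rank_match A B"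

lemma finite_A: "finite A" and finite_B: "finite B"
  using A_subset B_subset finite_subset by blast+

lemma match_A: "x \<in> A \<Longrightarrow> match x \<in> B \<and> rank B (match x) = rank A x"
  using rank_match_mem finite_A finite_B card_eq by blast

lemma match_B: "x \<in> B \<Longrightarrow> match x \<in> A \<and> rank A (match x) = rank B x"
  using rank_match_mem[of B A x] finite_A finite_B card_eq rank_match_commute[OF disjoint]
  by simp

lemma match_fixed: "x \<notin> A \<Longrightarrow> x \<notin> B \<Longrightarrow> match x = x"
  unfolding rank_match_def by simp

lemma match_match: "match (match x) = x"
proof -
  consider "x \<in> A" | "x \<in> B" | "x \<notin> A" "x \<notin> B"
    by blast
  then show ?thesis
  proof cases
    case 1
    then show ?thesis
      using match_A match_B rank_eq_rank_iff[OF finite_A] by metis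
  next
    case 2
    then show ?thesis
      using match_A match_B rank_eq_rank_iff[OF finite_B] by metis
  qed (simp add: match_fixed)
qed

lemma less_match_if_A:
  assumes "a \<in> A"
  shows "a < match a"
proof (rule ccontr)
  assume "\<not> a < match a"
  moreover have "match a \<noteq> a"
    using match_A[OF assms] assms disjoint by auto
  ultimately have "Suc (match a) \<le> a"
    by simp
  then have "rank A (Suc (match a)) \<le> rank A a"
    by (rule rank_mono[OF finite_A])
  also have "\<dots> < rank B (Suc (match a))"
    using match_A[OF assms] rank_Suc[OF finite_B] by simp
  finally show False
    using ballot leD by blast
qed

lemma match_less_if_B: "b \<in> B \<Longrightarrow> match b < b"
  using less_match_if_A match_B match_match by metis

lemma less_match_iff: "x < match x \<longleftrightarrow> x \<in> A"
  using less_match_if_A match_less_if_B match_fixed by (metis less_asym less_irrefl)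

lemma match_less_iff: "match x < x \<longleftrightarrow> x \<in> B"
  using less_match_if_A match_less_if_B match_fixed by (metis less_asym less_irrefl)

lemma match_strict_mono_on_A: "x < y \<Longrightarrow> x \<in> A \<Longrightarrow> y \<in> A \<Longrightarrow> match x < match y"
  using match_A rank_less_rank_iff finite_A finite_B by metis

lemma match_strict_mono_on_B: "x < y \<Longrightarrow> x \<in> B \<Longrightarrow> y \<in> B \<Longrightarrow> match x < match y"
  using match_B rank_less_rank_iff finite_A finite_B by metis

lemma fixed_point_less_match_B:
  assumes "x < y" "x \<in> {1..m}" "x \<notin> A" "x \<notin> B" "y \<in> B"
  shows "x < match y"
proof (rule ccontr)
  assume "\<not> x < match y"
  then have "match y < x"
    using match_B[OF assms(5)] assms(3) by (metis linorder_neqE_nat)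
  then have "rank A (match y) < rank A x"
    using rank_less_rank finite_A match_B[OF assms(5)] by blast
  also have "\<dots> = rank B x"
    using balanced_at_fixed_points assms(2-4) by simp
  also have "\<dots> \<le> rank B y"
    using rank_mono[OF finite_B] assms(1) by simp
  finally show False
    using match_B[OF assms(5)] by simp
qed

lemma match_strict_mono_off_A:
  assumes "x < y" "x \<in> {1..m}" "x \<notin> A" "y \<notin> A"
  shows "match x < match y"
proof (cases "x \<in> B")
  case True
  then show ?thesis
    using match_strict_mono_on_B match_less_if_B match_fixed assms by (metis order.strict_trans)
next
  case False
  then show ?thesis
    using fixed_point_less_match_B match_fixed assms by (cases "y \<in> B") auto
qed

lemma match_avoids321: "avoids321 m match"
proof (rule avoids321I)
  fix i j k assume ijk: "1 \<le> i" "i < j" "j < k" "k \<le> m"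
    and dec: "match j < match i" "match k < match j"
  show False
  proof (cases "j \<in> A")
    case True
    then have "i \<notin> A"
      using match_strict_mono_on_A ijk(2) dec(1) by (meson order.asym)
    then show False
      using less_match_iff[of i] less_match_iff[of j] True ijk dec by simp
  next
    case False
    have "k \<in> A"
    proof (rule ccontr)
      assume "k \<notin> A"
      then have "match j < match k"
        using match_strict_mono_off_A[of j k] ijk False by simp
      with dec(2) show False
        by simp
    qed
    then show False
      using less_match_iff[of k] less_match_iff[of j] False ijk dec by simp
  qed
qed

lemma match_permutes: "match permutes {1..m}"
  unfolding permutes_def
  using match_fixed match_match A_subset B_subset by (metis subsetD)

end

definition involution321 :: "nat \<Rightarrow> (nat \<Rightarrow> nat) \<Rightarrow> bool" where
  "involution321 m p \<longleftrightarrow> involution_on m p \<and> p ` {1..m} \<subseteq> {1..m} \<and> avoids321 m p"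

definition open_arcs :: "(nat \<Rightarrow> nat) \<Rightarrow> nat \<Rightarrow> nat set" where
  "open_arcs p i = {a. 1 \<le> a \<and> a < i \<and> i \<le> p a}"

lemma involution321_image: "involution321 m p \<Longrightarrow> i \<in> {1..m} \<Longrightarrow> p i \<in> {1..m}"
  unfolding involution321_def by blast

lemma involution321_involutive: "involution321 m p \<Longrightarrow> i \<in> {1..m} \<Longrightarrow> p (p i) = i"
  unfolding involution321_def involution_on_def by blast

lemma involution321_avoids321: "involution321 m p \<Longrightarrow> avoids321 m p"
  unfolding involution321_def by blast

lemma involution321_if_IC321: "p \<in> IC321 m \<Longrightarrow> involution321 m p"
  unfolding IC321_def involution321_def using permutes_in_image by fastforce

lemma finite_open_arcs: "finite (open_arcs p i)"
  unfolding open_arcs_def by (rule finite_subset[of _ "{..<i}"]) auto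

lemma deficiency_mem_open_arcs:
  assumes "involution321 m p" "i \<in> {1..m}" "p i < i"
  shows "p i \<in> open_arcs p i"
  using assms unfolding involution321_def involution_on_def open_arcs_def
  by (auto simp: image_subset_iff)

lemma deficiency_eq_Min_open_arcs:
  assumes p: "involution321 m p" and i: "i \<in> {1..m}" and "p i < i"
  shows "p i = Min (open_arcs p i)"
proof (rule Min_eqI[OF finite_open_arcs, symmetric])
  show "p i \<in> open_arcs p i"
    using deficiency_mem_open_arcs[OF assms] .
  fix a assume "a \<in> open_arcs p i"
  then have a: "1 \<le> a" "a < i" "i \<le> p a"
    unfolding open_arcs_def by auto
  show "p i \<le> a"
  proof (rule ccontr)
    assume "\<not> p i \<le> a"
    have "a \<in> {1..m}"
      using a i by simp
    moreover have "p (p i) = i"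
      using involution321_involutive[OF p i] .
    moreover have "p (p a) = a" "p a \<le> m"
      using involution321_involutive[OF p] involution321_image[OF p] \<open>a \<in> {1..m}\<close> by auto
    ultimately have "p a \<noteq> i"
      using \<open>\<not> p i \<le> a\<close> by auto
    then have "i < p a"
      using a by simp
    show False
      by (rule avoids321D[OF involution321_avoids321[OF p], of a "p i" i])
        (use a i \<open>\<not> p i \<le> a\<close> \<open>p i < i\<close> \<open>p (p i) = i\<close> \<open>i < p a\<close> \<open>p a \<le> m\<close> in auto)
  qed
qed

lemma open_arcs_empty_if_fixed:
  assumes p: "involution321 m p" and i: "i \<in> {1..m}" and "p i = i"
  shows "open_arcs p i = {}"
proof (rule ccontr)
  assume "open_arcs p i \<noteq> {}"
  then obtain a where a: "1 \<le> a" "a < i" "i \<le> p a"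
    unfolding open_arcs_def by auto
  have "a \<in> {1..m}"
    using a i by simp
  then have "p (p a) = a" "p a \<le> m"
    using involution321_involutive[OF p] involution321_image[OF p] by auto
  then have "i < p a"
    using a \<open>p i = i\<close> by (metis le_neq_implies_less less_irrefl)
  with a \<open>p (p a) = a\<close> \<open>p a \<le> m\<close> show False
    using avoids321D[OF involution321_avoids321[OF p], of a i "p a"] \<open>p i = i\<close> by simp
qed

lemma non_excedance_eq:
  assumes "involution321 m p" "i \<in> {1..m}" "\<not> i < p i"
  shows "p i = (if open_arcs p i = {} then i else Min (open_arcs p i))"
  using deficiency_mem_open_arcs[OF assms(1,2)] deficiency_eq_Min_open_arcs[OF assms(1,2)]
    open_arcs_empty_if_fixed[OF assms(1,2)] assms(3)
  by (cases "p i < i") auto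

lemma open_arcs_subset:
  assumes p: "involution321 m p" and s: "involution321 m s"
    and exc: "\<And>j. 1 \<le> j \<Longrightarrow> j < i \<Longrightarrow> j < p j \<Longrightarrow> j < s j"
    and def: "\<And>j. 1 \<le> j \<Longrightarrow> j < i \<Longrightarrow> s j < j \<Longrightarrow> p j = s j"
    and "i \<le> m"
  shows "open_arcs p i \<subseteq> open_arcs s i"
proof
  fix a assume "a \<in> open_arcs p i"
  then have a: "1 \<le> a" "a < i" "i \<le> p a"
    unfolding open_arcs_def by auto
  have "a < s a"
    using exc a by simp
  have "i \<le> s a"
  proof (rule ccontr)
    assume "\<not> i \<le> s a"
    have "a \<in> {1..m}"
      using a \<open>i \<le> m\<close> by simp
    then have sam: "s a \<in> {1..m}" and "s (s a) = a" "p (p (s a)) = s a"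
      using involution321_image[OF s] involution321_involutive[OF s] involution321_involutive[OF p]
      by blast+
    moreover have "p (s a) = s (s a)"
      using def[of "s a"] sam \<open>\<not> i \<le> s a\<close> \<open>a < s a\<close> \<open>s (s a) = a\<close> by simp
    ultimately show False
      using a \<open>\<not> i \<le> s a\<close> by simp
  qed
  then show "a \<in> open_arcs s i"
    using a unfolding open_arcs_def by simp
qed

text \<open>Induction on \<open>i\<close>: the open arcs at \<open>i\<close> depend only on the values below \<open>i\<close>, and they
  determine the value at a non-excedance \<open>i\<close>.\<close>

lemma non_excedances_agree:
  assumes p: "involution321 m p" and s: "involution321 m s" and "K \<le> m"
    and exc: "\<forall>j\<in>{1..K}. j < p j \<longleftrightarrow> j < s j"
  shows "i \<in> {1..K} \<Longrightarrow> \<not> i < p i \<Longrightarrow> p i = s i"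
proof (induction i rule: less_induct)
  case (less i)
  have agree: "p j = s j" if "1 \<le> j" "j < i" "\<not> j < p j" for j
    using less.IH that less.prems(1) by simp
  have "open_arcs p i = open_arcs s i"
  proof (rule equalityI)
    show "open_arcs p i \<subseteq> open_arcs s i"
      by (rule open_arcs_subset[OF p s]) (use exc agree less.prems(1) \<open>K \<le> m\<close> in auto)
    show "open_arcs s i \<subseteq> open_arcs p i"
      by (rule open_arcs_subset[OF s p]) (use exc agree less.prems(1) \<open>K \<le> m\<close> in \<open>auto simp: not_less\<close>)
  qed
  moreover have "i \<in> {1..m}" "\<not> i < s i"
    using less.prems exc \<open>K \<le> m\<close> by auto
  ultimately show ?case
    using non_excedance_eq[OF p] non_excedance_eq[OF s] less.prems by metis
qed

lemma involution321_eq_if_same_excedances: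
  assumes p: "involution321 m p" and s: "involution321 m s"
    and exc: "\<forall>j\<in>{1..m}. j < p j \<longleftrightarrow> j < s j" and i: "i \<in> {1..m}"
  shows "p i = s i"
proof (cases "i < p i")
  case True
  have pim: "p i \<in> {1..m}"
    using involution321_image[OF p i] .
  have "p (p i) = i" "s (s (p i)) = p i"
    using involution321_involutive[OF p i] involution321_involutive[OF s pim] .
  then have "s (p i) = i"
    using non_excedances_agree[OF p s order_refl exc pim] True by simp
  then show ?thesis
    using \<open>s (s (p i)) = p i\<close> by simp
next
  case False
  then show ?thesis
    using non_excedances_agree[OF p s order_refl exc i] by simp
qed

definition reverse_complement :: "nat \<Rightarrow> (nat \<Rightarrow> nat) \<Rightarrow> nat \<Rightarrow> nat" where
  "reverse_complement m p i = (if i \<in> {1..m} then m + 1 - p (m + 1 - i) else i)"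

lemma involution321_reverse_complement:
  assumes p: "involution321 m p"
  shows "involution321 m (reverse_complement m p)"
proof -
  let ?q = "reverse_complement m p"
  have mirror: "m + 1 - i \<in> {1..m}" if "i \<in> {1..m}" for i
    using that by auto
  have q: "?q i = m + 1 - p (m + 1 - i)" "?q i \<in> {1..m}" if "i \<in> {1..m}" for i
    using that involution321_image[OF p mirror[OF that]] unfolding reverse_complement_def by auto
  have "?q (?q i) = i" if "i \<in> {1..m}" for i
  proof -
    have "m + 1 - ?q i = p (m + 1 - i)"
      using q[OF that] involution321_image[OF p mirror[OF that]] by auto
    then show ?thesis
      using q(1)[OF q(2)[OF that]] involution321_involutive[OF p mirror[OF that]] that by auto
  qed
  moreover have "avoids321 m ?q"
  proof (rule avoids321I)
    fix i j k assume ijk: "1 \<le> i" "i < j" "j < k" "k \<le> m"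
      and dec: "?q j < ?q i" "?q k < ?q j"
    have mem: "i \<in> {1..m}" "j \<in> {1..m}" "k \<in> {1..m}"
      using ijk by auto
    then have "p (m + 1 - i) \<le> m" "p (m + 1 - j) \<le> m" "p (m + 1 - k) \<le> m"
      by (meson atLeastAtMost_iff involution321_image[OF p mirror])+
    then have "p (m + 1 - i) < p (m + 1 - j)" "p (m + 1 - j) < p (m + 1 - k)"
      using dec q(1)[OF mem(1)] q(1)[OF mem(2)] q(1)[OF mem(3)] by linarith+
    moreover have "1 \<le> m + 1 - k" "m + 1 - k < m + 1 - j" "m + 1 - j < m + 1 - i" "m + 1 - i \<le> m"
      using ijk by auto
    ultimately show False
      using avoids321D[OF involution321_avoids321[OF p]] by blast
  qed
  ultimately show ?thesis
    unfolding involution321_def involution_on_def using q(2) by blast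
qed

text \<open>The backward direction holds because \<open>p\<close> and its reverse complement have the same
  excedances.\<close>

lemma centrosymmetric_iff_symmetric_excedances:
  assumes p: "involution321 m p"
  shows "centrosymmetric m p \<longleftrightarrow> (\<forall>i\<in>{1..m}. i < p i \<longleftrightarrow> p (m + 1 - i) < m + 1 - i)"
proof -
  have mirror: "m + 1 - j \<in> {1..m}" if "j \<in> {1..m}" for j
    using that by auto
  have bound: "p i \<le> m" "p (m + 1 - i) \<le> m" if "i \<in> {1..m}" for i
    using involution321_image[OF p that] involution321_image[OF p mirror[OF that]] by auto
  show ?thesis
  proof
    assume centro: "centrosymmetric m p"
    show "\<forall>i\<in>{1..m}. i < p i \<longleftrightarrow> p (m + 1 - i) < m + 1 - i"
    proof
      fix i assume i: "i \<in> {1..m}"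
      then have "p i + p (m + 1 - i) = m + 1"
        using centro unfolding centrosymmetric_def by blast
      then show "i < p i \<longleftrightarrow> p (m + 1 - i) < m + 1 - i"
        using i by auto
    qed
  next
    assume sym: "\<forall>i\<in>{1..m}. i < p i \<longleftrightarrow> p (m + 1 - i) < m + 1 - i"
    let ?q = "reverse_complement m p"
    have "\<forall>j\<in>{1..m}. j < p j \<longleftrightarrow> j < ?q j"
    proof
      fix j assume j: "j \<in> {1..m}"
      then have "?q j = m + 1 - p (m + 1 - j)"
        unfolding reverse_complement_def by simp
      then show "j < p j \<longleftrightarrow> j < ?q j"
        using sym bound(2)[OF j] j by auto
    qed
    then have "p i = ?q i" if "i \<in> {1..m}" for i
      using involution321_eq_if_same_excedances[OF p involution321_reverse_complement[OF p]] that
      by blast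
    then show "centrosymmetric m p"
      unfolding centrosymmetric_def reverse_complement_def using bound(2) by fastforce
  qed
qed

lemma mem_mirror_image_iff:
  fixes m :: nat
  assumes "Y \<subseteq> {1..m}" "i \<in> {1..m}"
  shows "i \<in> (\<lambda>j. m + 1 - j) ` Y \<longleftrightarrow> m + 1 - i \<in> Y"
proof
  assume "i \<in> (\<lambda>j. m + 1 - j) ` Y"
  then obtain y where "y \<in> Y" "i = m + 1 - y"
    by blast
  moreover have "y \<le> m"
    using assms(1) \<open>y \<in> Y\<close> by auto
  ultimately have "m + 1 - i = y"
    by linarith
  then show "m + 1 - i \<in> Y"
    using \<open>y \<in> Y\<close> by simp
next
  assume "m + 1 - i \<in> Y"
  moreover have "i = m + 1 - (m + 1 - i)"
    using assms(2) by auto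
  ultimately show "i \<in> (\<lambda>j. m + 1 - j) ` Y"
    by blast
qed

lemma mirror_image_subset: "(X :: nat set) \<subseteq> {1..n} \<Longrightarrow> (\<lambda>i. 2 * n + 1 - i) ` X \<subseteq> {n + 1..2 * n}"
  by (auto simp: subset_iff)

lemma rank_Un_mirror_image:
  assumes X: "X \<subseteq> {1..n}" and Y: "Y \<subseteq> {1..n}"
  shows "rank (X \<union> (\<lambda>i. 2 * n + 1 - i) ` Y) t = rank X t + (card Y - rank Y (2 * n + 2 - t))"
proof -
  let ?r = "\<lambda>i::nat. 2 * n + 1 - i"
  have fin: "finite X" "finite Y"
    using X Y finite_subset by blast+
  let ?Y = "{y \<in> Y. 2 * n + 2 - t \<le> y}"
  have split: "{z \<in> X \<union> ?r ` Y. z < t} = {x \<in> X. x < t} \<union> ?r ` ?Y"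
    using Y by force
  have disjoint: "{x \<in> X. x < t} \<inter> ?r ` ?Y = {}"
    using X Y by force
  have "inj_on ?r ?Y"
    using Y by (force intro: inj_onI)
  moreover have "?Y = Y - {y \<in> Y. y < 2 * n + 2 - t}"
    by auto
  ultimately have "card (?r ` ?Y) = card Y - rank Y (2 * n + 2 - t)"
    using fin(2) unfolding rank_def by (simp add: card_image card_Diff_subset)
  then show ?thesis
    unfolding rank_def split by (subst card_Un_disjoint) (use fin disjoint in auto)
qed

text \<open>Reading \<open>1, \<dots>, n\<close> from left to right, every element of \<open>S\<close> opens an arc and every
  other position closes one if an arc is open; \<open>balance S i\<close> is the number of arcs open after
  position \<open>i\<close>. The excedances of the involution with \<open>E\<^sub>\<pi> = S\<close> are \<open>S\<close> and the mirror images of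
  the closing positions, its deficiencies are the closing positions and the mirror images of
  \<open>S\<close>.\<close>

fun balance :: "nat set \<Rightarrow> nat \<Rightarrow> nat" where
  "balance S 0 = 0"
| "balance S (Suc i) = (if Suc i \<in> S then Suc (balance S i) else balance S i - 1)"

definition closers :: "nat set \<Rightarrow> nat \<Rightarrow> nat set" where
  "closers S n = {i \<in> {1..n}. i \<notin> S \<and> 0 < balance S (i - 1)}"

definition excedances_of :: "nat set \<Rightarrow> nat \<Rightarrow> nat set" where
  "excedances_of S n = S \<union> (\<lambda>i. 2 * n + 1 - i) ` closers S n"

definition deficiencies_of :: "nat set \<Rightarrow> nat \<Rightarrow> nat set" where
  "deficiencies_of S n = closers S n \<union> (\<lambda>i. 2 * n + 1 - i) ` S"

locale half_excedances =
  fixes S :: "nat set" and n :: nat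
  assumes S_subset: "S \<subseteq> {1..n}"
begin

abbreviation "D \<equiv> closers S n"
abbreviation "A \<equiv> excedances_of S n"
abbreviation "B \<equiv> deficiencies_of S n"

lemma D_subset: "D \<subseteq> {1..n}"
  unfolding closers_def by auto

lemma finite_S: "finite S" and finite_D: "finite D"
  using S_subset D_subset finite_subset by blast+

lemma S_D_disjoint: "S \<inter> D = {}"
  unfolding closers_def by auto

lemma balance_eq: "i \<le> n \<Longrightarrow> balance S i + rank D (Suc i) = rank S (Suc i)"
proof (induction i)
  case 0
  have "rank S 1 = 0" "rank D 1 = 0"
    using S_subset D_subset unfolding rank_def by auto
  then show ?case
    by simp
next
  case (Suc i)
  have "Suc i \<in> D \<longleftrightarrow> Suc i \<notin> S \<and> 0 < balance S i"
    unfolding closers_def using Suc.prems by simp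
  then show ?case
    using Suc rank_Suc[OF finite_S, of "Suc i"] rank_Suc[OF finite_D, of "Suc i"] by auto
qed

lemma rank_D_le_rank_S: "rank D t \<le> rank S t"
proof (cases t)
  case (Suc i)
  show ?thesis
  proof (cases "i \<le> n")
    case True
    then show ?thesis
      using balance_eq Suc by fastforce
  next
    case False
    then have "rank D t = rank D (Suc n)" "rank S t = rank S (Suc n)"
      using rank_eq_card_if_subset[OF D_subset] rank_eq_card_if_subset[OF S_subset] Suc by simp_all
    then show ?thesis
      using balance_eq[of n] by linarith
  qed
qed simp

lemma rank_S_eq_rank_D:
  assumes "k \<in> {1..n}" "k \<notin> S" "k \<notin> D"
  shows "rank S k = rank D k"
proof -
  have "balance S (k - 1) = 0"
    using assms unfolding closers_def by auto
  then show ?thesis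
    using balance_eq[of "k - 1"] assms(1) by auto
qed

lemma rank_A: "rank A t = rank S t + (card D - rank D (2 * n + 2 - t))"
  unfolding excedances_of_def using rank_Un_mirror_image[OF S_subset D_subset] .

lemma rank_B: "rank B t = rank D t + (card S - rank S (2 * n + 2 - t))"
  unfolding deficiencies_of_def using rank_Un_mirror_image[OF D_subset S_subset] .

lemma ballot: "rank B t \<le> rank A t"
proof (cases "t \<le> n + 1")
  case True
  then have "rank S (2 * n + 2 - t) = card S" "rank D (2 * n + 2 - t) = card D"
    using rank_eq_card_if_subset[OF S_subset] rank_eq_card_if_subset[OF D_subset] by auto
  then show ?thesis
    using rank_A rank_B rank_D_le_rank_S[of t] by simp
next
  case False
  then have "rank S t = card S" "rank D t = card D"
    using rank_eq_card_if_subset[OF S_subset] rank_eq_card_if_subset[OF D_subset] by auto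
  moreover have "rank S (2 * n + 2 - t) \<le> card S" "rank D (2 * n + 2 - t) \<le> card D"
    using rank_le_card[OF finite_S] rank_le_card[OF finite_D] by auto
  ultimately show ?thesis
    using rank_A rank_B rank_D_le_rank_S[of "2 * n + 2 - t"] by simp
qed

lemma balanced_at_fixed_points:
  assumes f: "f \<in> {1..2 * n}" "f \<notin> A" "f \<notin> B"
  shows "rank B f = rank A f"
proof (cases "f \<le> n")
  case True
  then have "rank S f = rank D f"
    using f rank_S_eq_rank_D unfolding excedances_of_def deficiencies_of_def by simp
  moreover have "rank S (2 * n + 2 - f) = card S" "rank D (2 * n + 2 - f) = card D"
    using rank_eq_card_if_subset[OF S_subset] rank_eq_card_if_subset[OF D_subset] True by auto
  ultimately show ?thesis
    using rank_A rank_B by simp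
next
  case False
  let ?k = "2 * n + 1 - f"
  have k: "?k \<in> {1..n}" "2 * n + 2 - f = Suc ?k"
    using False f(1) by auto
  have "f \<in> (\<lambda>i. 2 * n + 1 - i) ` Y" if "?k \<in> Y" for Y
    using that f(1) image_iff by fastforce
  then have "?k \<notin> S" "?k \<notin> D"
    using f unfolding excedances_of_def deficiencies_of_def by auto
  then have "rank S (Suc ?k) = rank D (Suc ?k)"
    using rank_S_eq_rank_D[OF k(1)] rank_Suc[OF finite_S] rank_Suc[OF finite_D] by simp
  moreover have "rank S f = card S" "rank D f = card D"
    using rank_eq_card_if_subset[OF S_subset] rank_eq_card_if_subset[OF D_subset] False by auto
  moreover have "rank S (Suc ?k) \<le> card S" "rank D (Suc ?k) \<le> card D"
    using rank_le_card[OF finite_S] rank_le_card[OF finite_D] by auto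
  ultimately show ?thesis
    using rank_A[of f] rank_B[of f] k(2) by (simp add: add.commute)
qed

lemma ballot_sets: "ballot_sets A B (2 * n)"
proof
  have S: "S \<subseteq> {1..2 * n}" and D: "D \<subseteq> {1..2 * n}"
    using S_subset D_subset by auto
  have rS: "(\<lambda>i. 2 * n + 1 - i) ` S \<subseteq> {n + 1..2 * n}"
    and rD: "(\<lambda>i. 2 * n + 1 - i) ` D \<subseteq> {n + 1..2 * n}"
    using mirror_image_subset[OF S_subset] mirror_image_subset[OF D_subset] .
  then show "A \<subseteq> {1..2 * n}" "B \<subseteq> {1..2 * n}"
    using S D unfolding excedances_of_def deficiencies_of_def by auto
  have "inj_on (\<lambda>i. 2 * n + 1 - i) (S \<union> D)"
    using S_subset D_subset by (force intro: inj_onI)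
  then have "(\<lambda>i. 2 * n + 1 - i) ` S \<inter> (\<lambda>i. 2 * n + 1 - i) ` D = {}"
    using S_D_disjoint by (simp add: inj_on_image_Int[symmetric])
  moreover have "S \<inter> (\<lambda>i. 2 * n + 1 - i) ` S = {}" "(\<lambda>i. 2 * n + 1 - i) ` D \<inter> D = {}"
    using S_subset D_subset rS rD by fastforce+
  ultimately show "A \<inter> B = {}"
    unfolding excedances_of_def deficiencies_of_def Int_Un_distrib Int_Un_distrib2
    using S_D_disjoint by (auto simp: Int_commute)
  have "rank A (2 * n + 2) = card A" "rank B (2 * n + 2) = card B"
    using \<open>A \<subseteq> {1..2 * n}\<close> \<open>B \<subseteq> {1..2 * n}\<close> by (simp_all add: rank_eq_card_if_subset)
  moreover have "rank S (2 * n + 2) = card S" "rank D (2 * n + 2) = card D"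
    using rank_eq_card_if_subset[OF S_subset] rank_eq_card_if_subset[OF D_subset] by auto
  ultimately show "card A = card B"
    using rank_A[of "2 * n + 2"] rank_B[of "2 * n + 2"] by simp
qed (use ballot balanced_at_fixed_points in auto)

lemma mem_A_iff_mirror_mem_B:
  assumes "i \<in> {1..2 * n}"
  shows "i \<in> A \<longleftrightarrow> 2 * n + 1 - i \<in> B"
proof -
  have S: "S \<subseteq> {1..2 * n}" and D: "D \<subseteq> {1..2 * n}"
    using S_subset D_subset by auto
  have "2 * n + 1 - i \<in> {1..2 * n}" "2 * n + 1 - (2 * n + 1 - i) = i"
    using assms by auto
  then show ?thesis
    using mem_mirror_image_iff[OF S] mem_mirror_image_iff[OF D assms]
    unfolding excedances_of_def deficiencies_of_def by (metis Un_iff)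
qed

lemma match_IC321: "rank_match A B \<in> IC321 (2 * n)"
proof -
  interpret ballot_sets A B "2 * n"
    by (rule ballot_sets)
  have "involution321 (2 * n) match"
    unfolding involution321_def involution_on_def
    using match_match match_avoids321 permutes_in_image[OF match_permutes] by blast
  moreover have "i < match i \<longleftrightarrow> match (2 * n + 1 - i) < 2 * n + 1 - i" if "i \<in> {1..2 * n}" for i
    using less_match_iff match_less_iff mem_A_iff_mirror_mem_B[OF that] by simp
  ultimately have "centrosymmetric (2 * n) match"
    using centrosymmetric_iff_symmetric_excedances by simp
  then show ?thesis
    unfolding IC321_def involution_on_def
    using match_permutes match_match match_avoids321 by simp
qed

lemma Epi_match: "Epi n (rank_match A B) = S"
proof -
  interpret ballot_sets A B "2 * n"
    by (rule ballot_sets)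
  have "(\<lambda>i. 2 * n + 1 - i) ` D \<inter> {1..n} = {}"
    using mirror_image_subset[OF D_subset] by auto
  then show ?thesis
    unfolding Epi_def Exc_def less_match_iff unfolding excedances_of_def using S_subset by auto
qed

end

lemma mem_Epi_iff: "j \<in> {1..n} \<Longrightarrow> j \<in> Epi n p \<longleftrightarrow> j < p j"
  unfolding Epi_def Exc_def by simp

lemma inj_on_Epi: "inj_on (Epi n) (IC321 (2 * n))"
proof (rule inj_onI)
  fix p s assume IC: "p \<in> IC321 (2 * n)" "s \<in> IC321 (2 * n)" and Epi: "Epi n p = Epi n s"
  have p: "involution321 (2 * n) p" and s: "involution321 (2 * n) s"
    using involution321_if_IC321 IC by blast+
  have sym: "\<forall>i\<in>{1..2 * n}. i < p i \<longleftrightarrow> p (2 * n + 1 - i) < 2 * n + 1 - i"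
            "\<forall>i\<in>{1..2 * n}. i < s i \<longleftrightarrow> s (2 * n + 1 - i) < 2 * n + 1 - i"
    using IC centrosymmetric_iff_symmetric_excedances[OF p] centrosymmetric_iff_symmetric_excedances[OF s]
    unfolding IC321_def by simp_all
  have exc_half: "\<forall>j\<in>{1..n}. j < p j \<longleftrightarrow> j < s j"
    using Epi mem_Epi_iff by blast
  have def_half: "p j < j \<longleftrightarrow> s j < j" if j: "j \<in> {1..n}" for j
  proof (cases "j < p j")
    case True
    moreover have "j < s j"
      using True exc_half j by blast
    ultimately show ?thesis
      by linarith
  next
    case False
    then show ?thesis
      using non_excedances_agree[OF p s _ exc_half j] by simp
  qed
  have "\<forall>j\<in>{1..2 * n}. j < p j \<longleftrightarrow> j < s j"
  proof
    fix j assume j: "j \<in> {1..2 * n}"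
    show "j < p j \<longleftrightarrow> j < s j"
    proof (cases "j \<le> n")
      case True
      then show ?thesis
        using exc_half j by simp
    next
      case False
      then have "2 * n + 1 - j \<in> {1..n}"
        using j by auto
      then show ?thesis
        using sym j def_half by blast
    qed
  qed
  then have "p i = s i" if "i \<in> {1..2 * n}" for i
    using involution321_eq_if_same_excedances[OF p s] that by blast
  moreover have "p permutes {1..2 * n}" "s permutes {1..2 * n}"
    using IC unfolding IC321_def by simp_all
  ultimately show "p = s"
    using permutes_not_in by (metis ext)
qed

theorem mainTheorem5:
  fixes n :: nat
  assumes "n \<ge> 1"
  shows "bij_betw (Epi n) (IC321 (2 * n)) (Pow {1..n}) \<and> card (IC321 (2 * n)) = 2 ^ n"
proof -
  have "Epi n ` IC321 (2 * n) \<subseteq> Pow {1..n}"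
    unfolding Epi_def by auto
  moreover have "S \<in> Epi n ` IC321 (2 * n)" if "S \<in> Pow {1..n}" for S
  proof -
    interpret half_excedances S n
      using that by unfold_locales simp
    show ?thesis
      using match_IC321 Epi_match by (metis image_eqI)
  qed
  ultimately have bij: "bij_betw (Epi n) (IC321 (2 * n)) (Pow {1..n})"
    using inj_on_Epi unfolding bij_betw_def by blast
  then have "card (IC321 (2 * n)) = 2 ^ n"
    by (simp add: bij_betw_same_card card_Pow)
  with bij show ?thesis
    by simp
qed

end
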